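(* Let $T_1,T_2$ be rooted trees in which every leaf of $T_i$ has depth $h_i$. A prefix is a pair $p=(p_1,p_2)$ with $p_i$ a node of $T_i$; it is fully specified if both $p_1,p_2$ are leaves. Write $e\preceq p$ if for each $i$, $p_i$ is an ancestor of or equal to $e_i$, and $e\prec p$ if $e\preceq p$ and $e\ne p$. For a finite nonempty set $X$ of prefixes, if for each $i$ the nodes $\{x_i:x\in X\}$ are pairwise comparable in $T_i$ (each is an ancestor of or equal to the other), let $\mathrm{glb}(X)$ be the prefix whose $i$-th coordinate is the deepest of these nodes; otherwise $\mathrm{glb}(X)$ is undefined (a trivial item, contributing count $0$). Let $S$ be a finite multiset of fully specified elements, $f(e)$ the multiplicity of $e$, $f(p)=\sum_{e\in S,\,e\preceq p}f(e)$ for a prefix $p$. Let $P$ be any set of prefixes and $p$ a prefix; set $P_p=\{q\in P:q\prec p\}$, $F_p=\sum f(e)$ over fully specified $e\preceq p$ with $e\not\preceq q$ for all $q\in P_p$, and $H_p=\{h\in P: h\prec p,\ \nexists h'\in P \text{ with } h\prec h'\prec p\}$. Let $T_p$ be the set of prefixes $q$ such that $q=\mathrm{glb}(\{h,h'\})$ for some two distinct $h,h'\in H_p$, but $q$ is not equal to $\mathrm{glb}(X)$ for any $X\subseteq H_p$ with $|X|\ge 3$. Then $$F_p=f(p)-\sum_{q\in H_p}f(q)+\sum_{q\in T_p}f(q).$$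
   Context: Two-dimensional hierarchical setting (e.g. source/destination IP address pairs, each coordinate generalized by wildcarding trailing bytes). $f(p)$ is the unconditioned count and $F_p$ the conditioned count of $p$ with respect to $P$. *)

theory Defs
  imports Main "HOL-Library.Multiset" "HOL-Library.Sublist"
begin

text \<open>A rooted tree is represented by the set of its nodes, each node being the list of
  edge labels on the path from the root (the root is the empty list).  Node y is an
  ancestor of or equal to node x iff y is a prefix of x.\<close>

definition rooted_tree :: "'a list set \<Rightarrow> bool" where
  "rooted_tree T \<longleftrightarrow> finite T \<and> [] \<in> T \<and> (\<forall>xs ys. xs @ ys \<in> T \<longrightarrow> xs \<in> T)"

definition is_leaf :: "'a list set \<Rightarrow> 'a list \<Rightarrow> bool" where
  "is_leaf T x \<longleftrightarrow> x \<in> T \<and> (\<forall>c. x @ [c] \<notin> T)"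

definition leaves_at_depth :: "'a list set \<Rightarrow> nat \<Rightarrow> bool" where
  "leaves_at_depth T h \<longleftrightarrow> (\<forall>x. is_leaf T x \<longrightarrow> length x = h)"

definition pre_le :: "('a list \<times> 'b list) \<Rightarrow> ('a list \<times> 'b list) \<Rightarrow> bool" where
  "pre_le e p \<longleftrightarrow> prefix (fst p) (fst e) \<and> prefix (snd p) (snd e)"

definition pre_lt :: "('a list \<times> 'b list) \<Rightarrow> ('a list \<times> 'b list) \<Rightarrow> bool" where
  "pre_lt e p \<longleftrightarrow> pre_le e p \<and> e \<noteq> p"

definition fully_specified ::
  "'a list set \<Rightarrow> 'b list set \<Rightarrow> ('a list \<times> 'b list) \<Rightarrow> bool" where
  "fully_specified T1 T2 e \<longleftrightarrow> is_leaf T1 (fst e) \<and> is_leaf T2 (snd e)"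

definition pairwise_comparable :: "'c list set \<Rightarrow> bool" where
  "pairwise_comparable A \<longleftrightarrow> (\<forall>x\<in>A. \<forall>y\<in>A. prefix x y \<or> prefix y x)"

text \<open>Greatest lower bound of a finite nonempty set of prefixes; None = undefined.\<close>
definition glb :: "('a list \<times> 'b list) set \<Rightarrow> ('a list \<times> 'b list) option" where
  "glb X = (if finite X \<and> X \<noteq> {} \<and> pairwise_comparable (fst ` X)
                 \<and> pairwise_comparable (snd ` X)
            then Some (ARG_MAX length x. x \<in> fst ` X, ARG_MAX length y. y \<in> snd ` X)
            else None)"

text \<open>Unconditioned count f(p) (for a fully specified e, f(e) = count S e).\<close>
definition fcount :: "('a list \<times> 'b list) multiset \<Rightarrow> ('a list \<times> 'b list) \<Rightarrow> nat" where
  "fcount S p = (\<Sum>e\<in>{e \<in> set_mset S. pre_le e p}. count S e)"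

definition P_below :: "('a list \<times> 'b list) set \<Rightarrow> ('a list \<times> 'b list) \<Rightarrow> ('a list \<times> 'b list) set" where
  "P_below P p = {q \<in> P. pre_lt q p}"

definition Fcond :: "'a list set \<Rightarrow> 'b list set \<Rightarrow> ('a list \<times> 'b list) multiset
    \<Rightarrow> ('a list \<times> 'b list) set \<Rightarrow> ('a list \<times> 'b list) \<Rightarrow> nat" where
  "Fcond T1 T2 S P p = (\<Sum>e\<in>{e \<in> T1 \<times> T2. fully_specified T1 T2 e \<and> pre_le e p
        \<and> (\<forall>q\<in>P_below P p. \<not> pre_le e q)}. count S e)"

definition H_set :: "('a list \<times> 'b list) set \<Rightarrow> ('a list \<times> 'b list) \<Rightarrow> ('a list \<times> 'b list) set" where
  "H_set P p = {h \<in> P. pre_lt h p \<and> \<not> (\<exists>h'\<in>P. pre_lt h h' \<and> pre_lt h' p)}"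

definition T_set :: "('a list \<times> 'b list) set \<Rightarrow> ('a list \<times> 'b list) \<Rightarrow> ('a list \<times> 'b list) set" where
  "T_set P p = {q. (\<exists>h\<in>H_set P p. \<exists>h'\<in>H_set P p. h \<noteq> h' \<and> glb {h, h'} = Some q)
      \<and> \<not> (\<exists>X\<subseteq>H_set P p. card X \<ge> 3 \<and> glb X = Some q)}"

end

theory Submission
  imports Defs
begin

text \<open>It suffices to check the identity separately for each fully specified element e, i.e.
  to show that the indicator of ``e is counted in F_p'' equals
  [e \<preceq> p] - #{h \<in> H_p. e \<preceq> h} + #{q \<in> T_p. e \<preceq> q}.  The members of H_p above e form an
  antichain of prefixes of the single element e, hence a staircase: ordered by increasing depth
  of the first coordinate, their second coordinates strictly decrease.  The glb of two steps is
  the glb of every step between them, so only glbs of consecutive steps survive in T_p.  Thus a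
  staircase of k \<ge> 1 steps contributes k - 1 members of T_p above e, and the right-hand side
  is 1 - k + (k - 1) = 0, as is the left-hand side because e lies below a member of P_p.  If no
  member of H_p lies above e, then no member of P_p does either, and both sides equal [e \<preceq> p].\<close>

lemma pre_le_refl [simp]: "pre_le x x"
  unfolding pre_le_def by simp

lemma pre_le_trans: "pre_le x y \<Longrightarrow> pre_le y z \<Longrightarrow> pre_le x z"
  unfolding pre_le_def by (meson prefix_order.trans)

lemma pre_lt_imp_length_less:
  assumes "pre_lt x y"
  shows "length (fst y) + length (snd y) < length (fst x) + length (snd x)"
proof -
  have "prefix (fst y) (fst x)" "prefix (snd y) (snd x)" "fst y \<noteq> fst x \<or> snd y \<noteq> snd x"
    using assms unfolding pre_lt_def pre_le_def by (auto simp: prod_eq_iff)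
  then show ?thesis
    by (metis add_le_less_mono add_less_le_mono prefix_length_le prefix_length_less
        prefix_order.le_neq_trans)
qed

subsection \<open>Greatest lower bounds\<close>

lemma chain_arg_max_length:
  fixes A :: "'c list set"
  assumes "finite A" "A \<noteq> {}" "pairwise_comparable A"
  shows "(ARG_MAX length x. x \<in> A) \<in> A" "\<forall>x\<in>A. prefix x (ARG_MAX length x. x \<in> A)"
proof -
  let ?m = "ARG_MAX length x. x \<in> A"
  obtain k where "k \<in> A" using assms(2) by blast
  moreover have "\<forall>y. y \<in> A \<longrightarrow> length y < Suc (Max (length ` A))"
    using assms(1) by (simp add: le_imp_less_Suc)
  ultimately have m: "?m \<in> A" "\<forall>y\<in>A. length y \<le> length ?m"
    using arg_max_nat_lemma[of "\<lambda>x. x \<in> A"] by auto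
  show "?m \<in> A" by (fact m(1))
  show "\<forall>x\<in>A. prefix x ?m"
    using assms(3) m unfolding pairwise_comparable_def
    by (metis prefix_length_prefix)
qed

lemma glb_eq_Some_iff:
  "glb X = Some q \<longleftrightarrow>
     finite X \<and> fst q \<in> fst ` X \<and> snd q \<in> snd ` X \<and> (\<forall>x\<in>X. pre_le q x)"
  (is "_ \<longleftrightarrow> ?bounds")
proof
  assume "glb X = Some q"
  then have "finite X" "X \<noteq> {}" "pairwise_comparable (fst ` X)" "pairwise_comparable (snd ` X)"
    and "q = (ARG_MAX length x. x \<in> fst ` X, ARG_MAX length y. y \<in> snd ` X)"
    unfolding glb_def by (auto split: if_splits)
  then show ?bounds
    using chain_arg_max_length[of "fst ` X"] chain_arg_max_length[of "snd ` X"]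
    unfolding pre_le_def by auto
next
  assume q: ?bounds
  have attained: "(ARG_MAX length x. x \<in> A) = c"
    if "finite A" "c \<in> A" "\<forall>x\<in>A. prefix x c" for A :: "'c list set" and c
  proof -
    have "pairwise_comparable A"
      using that unfolding pairwise_comparable_def by (meson prefix_same_cases)
    with chain_arg_max_length[of A] that show ?thesis
      by (metis empty_iff prefix_order.antisym)
  qed
  have "pairwise_comparable (fst ` X)" "pairwise_comparable (snd ` X)"
    using q unfolding pairwise_comparable_def pre_le_def
    by (metis (no_types, lifting) image_iff prefix_same_cases)+
  moreover have "(ARG_MAX length x. x \<in> fst ` X) = fst q" "(ARG_MAX length x. x \<in> snd ` X) = snd q"
    using q unfolding pre_le_def by (auto intro: attained)
  ultimately show "glb X = Some q"
    using q unfolding glb_def by auto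
qed

lemma glb_le: "glb X = Some q \<Longrightarrow> x \<in> X \<Longrightarrow> pre_le q x"
  by (simp add: glb_eq_Some_iff)

subsection \<open>Staircases\<close>

definition antichain :: "('a list \<times> 'b list) set \<Rightarrow> bool" where
  "antichain A \<longleftrightarrow> (\<forall>x\<in>A. \<forall>y\<in>A. pre_le x y \<longrightarrow> x = y)"

definition consecutive ::
    "('a list \<times> 'b list) set \<Rightarrow> ('a list \<times> 'b list) \<Rightarrow> ('a list \<times> 'b list) \<Rightarrow> bool" where
  "consecutive K x y \<longleftrightarrow> x \<in> K \<and> y \<in> K \<and> length (fst x) < length (fst y)
     \<and> (\<forall>z\<in>K. length (fst z) < length (fst y) \<longrightarrow> length (fst z) \<le> length (fst x))"

context
  fixes K :: "('a list \<times> 'b list) set" and e :: "'a list \<times> 'b list"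
  assumes antichain_K: "antichain K" and K_above: "\<And>x. x \<in> K \<Longrightarrow> pre_le e x"
begin

lemma staircase_fst_prefix:
  "x \<in> K \<Longrightarrow> y \<in> K \<Longrightarrow> length (fst x) \<le> length (fst y) \<Longrightarrow> prefix (fst x) (fst y)"
  using K_above prefix_length_prefix unfolding pre_le_def by blast

lemma staircase_snd_prefix:
  "x \<in> K \<Longrightarrow> y \<in> K \<Longrightarrow> length (snd x) \<le> length (snd y) \<Longrightarrow> prefix (snd x) (snd y)"
  using K_above prefix_length_prefix unfolding pre_le_def by blast

lemma staircase_fst_length_inj:
  assumes "x \<in> K" "y \<in> K" "length (fst x) = length (fst y)"
  shows "x = y"
proof -
  have "pre_le x y \<or> pre_le y x"
    using assms staircase_fst_prefix staircase_snd_prefix unfolding pre_le_def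
    by (metis nle_le)
  then show ?thesis
    using antichain_K assms unfolding antichain_def by blast
qed

lemma staircase_snd_length_less:
  assumes "x \<in> K" "y \<in> K" "length (fst x) < length (fst y)"
  shows "length (snd y) < length (snd x)"
proof (rule ccontr)
  assume "\<not> ?thesis"
  then have "pre_le y x"
    using assms staircase_fst_prefix staircase_snd_prefix unfolding pre_le_def by simp
  then show False
    using antichain_K assms unfolding antichain_def by blast
qed

lemma staircase_glb:
  assumes "X \<subseteq> K" "finite X" "x \<in> X" "y \<in> X"
    and between: "\<And>z. z \<in> X \<Longrightarrow> length (fst x) \<le> length (fst z) \<and> length (fst z) \<le> length (fst y)"
  shows "glb X = Some (fst y, snd x)"
proof -
  have "prefix (snd z) (snd x)" if "z \<in> X" for z
  proof (cases "length (fst x) = length (fst z)")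
    case True
    then show ?thesis using staircase_fst_length_inj assms that by (metis subsetD prefix_order.refl)
  next
    case False
    then show ?thesis
      using between[OF that] staircase_snd_length_less staircase_snd_prefix assms that
      by (metis le_neq_implies_less less_imp_le subsetD)
  qed
  moreover have "prefix (fst z) (fst y)" if "z \<in> X" for z
    using between[OF that] staircase_fst_prefix assms that by blast
  ultimately show ?thesis
    using assms unfolding glb_eq_Some_iff pre_le_def by auto
qed

lemma staircase_glb_pair:
  "x \<in> K \<Longrightarrow> y \<in> K \<Longrightarrow> length (fst x) < length (fst y) \<Longrightarrow> glb {x, y} = Some (fst y, snd x)"
  by (rule staircase_glb) auto

lemma staircase_glb_between:
  assumes "X \<subseteq> K" "glb X = Some (fst y, snd x)" "x \<in> K" "z \<in> X"
  shows "length (fst x) \<le> length (fst z) \<and> length (fst z) \<le> length (fst y)"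
proof -
  have "prefix (fst z) (fst y)" "prefix (snd z) (snd x)"
    using glb_le[OF assms(2,4)] unfolding pre_le_def by auto
  then show ?thesis
    using staircase_snd_length_less[of z x] assms
    by (metis leI not_less prefix_length_le subsetD)
qed

lemma consecutive_unique:
  assumes "consecutive K x y" "consecutive K x' y"
  shows "x = x'"
proof -
  have "length (fst x) = length (fst x')"
    using assms unfolding consecutive_def by (meson le_antisym)
  then show ?thesis
    using assms staircase_fst_length_inj unfolding consecutive_def by blast
qed

lemma ex_consecutive:
  assumes "x\<^sub>0 \<in> K" "y \<in> K" "length (fst x\<^sub>0) < length (fst y)"
  shows "\<exists>x. consecutive K x y"
proof -
  obtain x where "x \<in> K \<and> length (fst x) < length (fst y)"
    "\<forall>z. z \<in> K \<and> length (fst z) < length (fst y) \<longrightarrow> length (fst z) \<le> length (fst x)"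
    using ex_has_greatest_nat[of "\<lambda>x. x \<in> K \<and> length (fst x) < length (fst y)" x\<^sub>0
        "\<lambda>x. length (fst x)" "length (fst y)"] assms
    by blast
  then show ?thesis
    using assms unfolding consecutive_def by blast
qed

lemma consecutive_if_no_glb_triple:
  assumes "x \<in> K" "y \<in> K" "length (fst x) < length (fst y)"
    and no_triple: "\<And>z. z \<in> K \<Longrightarrow> z \<noteq> x \<Longrightarrow> z \<noteq> y \<Longrightarrow> glb {x, z, y} \<noteq> Some (fst y, snd x)"
  shows "consecutive K x y"
proof -
  have "length (fst z) \<le> length (fst x)" if "z \<in> K" "length (fst z) < length (fst y)" for z
  proof (rule ccontr)
    assume z_above_x: "\<not> ?thesis"
    then have "glb {x, z, y} = Some (fst y, snd x)"
      using assms(1-3) that by (intro staircase_glb) auto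
    moreover have "z \<noteq> x" "z \<noteq> y"
      using z_above_x that by auto
    ultimately show False using no_triple that(1) by blast
  qed
  then show ?thesis
    using assms(1-3) unfolding consecutive_def by blast
qed

lemma consecutive_glb_subset:
  assumes "consecutive K x y" "X \<subseteq> K" "glb X = Some (fst y, snd x)"
  shows "X \<subseteq> {x, y}"
proof
  fix z assume "z \<in> X"
  have "x \<in> K" "y \<in> K" using assms(1) unfolding consecutive_def by auto
  have "length (fst x) \<le> length (fst z) \<and> length (fst z) \<le> length (fst y)"
    using staircase_glb_between[OF assms(2,3) \<open>x \<in> K\<close> \<open>z \<in> X\<close>] .
  then have "length (fst z) = length (fst x) \<or> length (fst z) = length (fst y)"
    using assms(1,2) \<open>z \<in> X\<close> unfolding consecutive_def by force
  then show "z \<in> {x, y}"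
    using staircase_fst_length_inj assms(2) \<open>z \<in> X\<close> \<open>x \<in> K\<close> \<open>y \<in> K\<close> by blast
qed

lemma inj_on_fst_consecutive_glbs:
  "inj_on fst {(fst y, snd x) | x y. consecutive K x y}"
proof (rule inj_onI)
  fix q q' assume "q \<in> {(fst y, snd x) | x y. consecutive K x y}"
    "q' \<in> {(fst y, snd x) | x y. consecutive K x y}" "fst q = fst q'"
  then obtain x y x' y' where xy: "consecutive K x y" "consecutive K x' y'"
    and q: "q = (fst y, snd x)" "q' = (fst y', snd x')"
    by blast
  have "y = y'"
    using xy \<open>fst q = fst q'\<close> staircase_fst_length_inj
    unfolding q consecutive_def by simp
  then show "q = q'" using consecutive_unique xy q by blast
qed

lemma fst_consecutive_glbs:
  assumes "k \<in> K" "\<forall>z\<in>K. length (fst k) \<le> length (fst z)"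
  shows "fst ` {(fst y, snd x) | x y. consecutive K x y} = fst ` (K - {k})"
proof
  show "fst ` {(fst y, snd x) | x y. consecutive K x y} \<subseteq> fst ` (K - {k})"
  proof
    fix a assume "a \<in> fst ` {(fst y, snd x) | x y. consecutive K x y}"
    then obtain x y where "consecutive K x y" "a = fst y" by auto
    moreover from this have "y \<noteq> k" using assms(2) unfolding consecutive_def by fastforce
    ultimately show "a \<in> fst ` (K - {k})" unfolding consecutive_def by blast
  qed
  show "fst ` (K - {k}) \<subseteq> fst ` {(fst y, snd x) | x y. consecutive K x y}"
  proof
    fix a assume "a \<in> fst ` (K - {k})"
    then obtain y where y: "y \<in> K" "y \<noteq> k" "a = fst y" by blast
    then have "length (fst k) < length (fst y)"
      using assms staircase_fst_length_inj by (metis le_neq_implies_less)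
    then obtain x where "consecutive K x y"
      using ex_consecutive assms(1) y(1) by blast
    then have "(fst y, snd x) \<in> {(fst y, snd x) | x y. consecutive K x y}" by blast
    then show "a \<in> fst ` {(fst y, snd x) | x y. consecutive K x y}"
      unfolding y(3) by (rule rev_image_eqI) simp
  qed
qed

lemma card_consecutive_glbs:
  assumes "finite K" "K \<noteq> {}"
  shows "card {(fst y, snd x) | x y. consecutive K x y} + 1 = card K"
proof -
  obtain k where k: "k \<in> K" "\<forall>z\<in>K. length (fst k) \<le> length (fst z)"
    using ex_has_least_nat[of "\<lambda>x. x \<in> K" _ "\<lambda>x. length (fst x)"] assms(2) by blast
  have "inj_on fst K"
    by (rule inj_onI) (metis staircase_fst_length_inj)
  have "card {(fst y, snd x) | x y. consecutive K x y}
      = card (fst ` {(fst y, snd x) | x y. consecutive K x y})"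
    using inj_on_fst_consecutive_glbs by (simp add: card_image)
  also have "\<dots> = card (fst ` (K - {k}))"
    using fst_consecutive_glbs[OF k] by simp
  also have "\<dots> = card K - 1"
    using k(1) \<open>inj_on fst K\<close> by (simp add: card_image inj_on_diff)
  finally show ?thesis
    using assms k(1) by (simp add: card_gt_0_iff)
qed

end

subsection \<open>Glbs of pairs that are not glbs of larger sets\<close>

definition proper_pair_glbs :: "('a list \<times> 'b list) set \<Rightarrow> ('a list \<times> 'b list) set" where
  "proper_pair_glbs H = {q. (\<exists>h\<in>H. \<exists>h'\<in>H. h \<noteq> h' \<and> glb {h, h'} = Some q)
      \<and> \<not> (\<exists>X\<subseteq>H. card X \<ge> 3 \<and> glb X = Some q)}"

lemma T_set_eq_proper_pair_glbs: "T_set P p = proper_pair_glbs (H_set P p)"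
  unfolding T_set_def proper_pair_glbs_def ..

lemma finite_proper_pair_glbs: "finite H \<Longrightarrow> finite (proper_pair_glbs H)"
proof -
  assume "finite H"
  moreover have "proper_pair_glbs H \<subseteq> (\<lambda>(h, h'). the (glb {h, h'})) ` (H \<times> H)"
    unfolding proper_pair_glbs_def by (force simp: image_iff)
  ultimately show ?thesis by (meson finite_SigmaI finite_imageI finite_subset)
qed

lemma proper_pair_glb_eq_consecutive_glb:
  fixes e :: "'a list \<times> 'b list"
  assumes "antichain H" "q \<in> proper_pair_glbs H" "pre_le e q"
  defines "K \<equiv> {h \<in> H. pre_le e h}"
  shows "\<exists>x y. consecutive K x y \<and> q = (fst y, snd x)"
proof -
  have K: "antichain K" "\<And>x. x \<in> K \<Longrightarrow> pre_le e x"
    using assms(1) unfolding K_def antichain_def by auto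
  from assms(2) obtain h h' where hh': "h \<in> H" "h' \<in> H" "h \<noteq> h'" "glb {h, h'} = Some q"
    and no_triple: "\<not> (\<exists>X\<subseteq>H. card X \<ge> 3 \<and> glb X = Some q)"
    unfolding proper_pair_glbs_def by blast
  then have "h \<in> K" "h' \<in> K"
    using assms(3) unfolding K_def by (auto intro: pre_le_trans glb_le)
  have "length (fst h) \<noteq> length (fst h')"
    using staircase_fst_length_inj[OF K] \<open>h \<in> K\<close> \<open>h' \<in> K\<close> hh'(3) by blast
  then obtain x y where xy: "{x, y} = {h, h'}" "length (fst x) < length (fst y)"
  proof (cases "length (fst h) < length (fst h')")
    case True
    then show ?thesis using that[of h h'] by blast
  next
    case False
    then show ?thesis using that[of h' h] \<open>length (fst h) \<noteq> length (fst h')\<close>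
      by (simp add: insert_commute)
  qed
  have "{x, y} \<subseteq> K"
    using xy(1) \<open>h \<in> K\<close> \<open>h' \<in> K\<close> by simp
  then have "x \<in> K" "y \<in> K" by simp_all
  have "x \<noteq> y"
    using xy(2) by auto
  have q: "q = (fst y, snd x)"
    using staircase_glb_pair[OF K \<open>x \<in> K\<close> \<open>y \<in> K\<close> xy(2)] hh'(4) xy(1) by simp
  have "consecutive K x y"
  proof (rule consecutive_if_no_glb_triple[OF K \<open>x \<in> K\<close> \<open>y \<in> K\<close> xy(2)])
    fix z assume "z \<in> K" "z \<noteq> x" "z \<noteq> y"
    then have "card {x, z, y} = 3"
      using \<open>x \<noteq> y\<close> by simp
    moreover have "{x, z, y} \<subseteq> H"
      using \<open>z \<in> K\<close> \<open>x \<in> K\<close> \<open>y \<in> K\<close> unfolding K_def by blast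
    ultimately show "glb {x, z, y} \<noteq> Some (fst y, snd x)"
      using no_triple q by (metis order_refl)
  qed
  then show ?thesis
    using q by blast
qed

lemma consecutive_glb_in_proper_pair_glbs:
  fixes H :: "('a list \<times> 'b list) set" and e :: "'a list \<times> 'b list"
  defines "K \<equiv> {h \<in> H. pre_le e h}"
  assumes "antichain H" and xy: "consecutive K x y"
  shows "(fst y, snd x) \<in> proper_pair_glbs H" "pre_le e (fst y, snd x)"
proof -
  have K: "antichain K" "\<And>x. x \<in> K \<Longrightarrow> pre_le e x"
    using assms(2) unfolding K_def antichain_def by auto
  from xy have "x \<in> K" "y \<in> K" "length (fst x) < length (fst y)"
    unfolding consecutive_def by auto
  show above: "pre_le e (fst y, snd x)"
    using K(2)[OF \<open>x \<in> K\<close>] K(2)[OF \<open>y \<in> K\<close>] unfolding pre_le_def by simp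
  have "glb {x, y} = Some (fst y, snd x)"
    using staircase_glb_pair[OF K \<open>x \<in> K\<close> \<open>y \<in> K\<close> \<open>length (fst x) < length (fst y)\<close>] .
  moreover have "x \<noteq> y" "x \<in> H" "y \<in> H"
    using \<open>x \<in> K\<close> \<open>y \<in> K\<close> \<open>length (fst x) < length (fst y)\<close> unfolding K_def by auto
  moreover have "\<not> (\<exists>X\<subseteq>H. card X \<ge> 3 \<and> glb X = Some (fst y, snd x))"
  proof
    assume "\<exists>X\<subseteq>H. card X \<ge> 3 \<and> glb X = Some (fst y, snd x)"
    then obtain X where X: "X \<subseteq> H" "card X \<ge> 3" "glb X = Some (fst y, snd x)" by blast
    then have "X \<subseteq> K"
      using above unfolding K_def by (auto intro: pre_le_trans glb_le)
    then have "X \<subseteq> {x, y}"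
      using consecutive_glb_subset[OF K xy] X(3) by blast
    then have "card X \<le> card {x, y}" by (intro card_mono) simp_all
    also have "\<dots> \<le> 2" by (simp add: card_insert_if)
    finally show False using X(2) by simp
  qed
  ultimately show "(fst y, snd x) \<in> proper_pair_glbs H"
    unfolding proper_pair_glbs_def by blast
qed

lemma proper_pair_glbs_above:
  fixes e :: "'a list \<times> 'b list"
  assumes "antichain H"
  shows "{q \<in> proper_pair_glbs H. pre_le e q} = {(fst y, snd x) | x y. consecutive {h \<in> H. pre_le e h} x y}"
  using proper_pair_glb_eq_consecutive_glb[OF assms] consecutive_glb_in_proper_pair_glbs[OF assms]
  by blast

subsection \<open>The counting identity\<close>

lemma antichain_H_set: "antichain (H_set P p)"
  unfolding antichain_def H_set_def pre_lt_def by blast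

lemma H_set_above_P_below:
  assumes "q \<in> P_below P p"
  shows "\<exists>h\<in>H_set P p. pre_le q h"
proof -
  let ?depth = "\<lambda>x. length (fst x) + length (snd x)"
  obtain h where h: "h \<in> P_below P p" "pre_le q h"
    and least: "\<forall>y. y \<in> P_below P p \<and> pre_le q y \<longrightarrow> ?depth h \<le> ?depth y"
    using ex_has_least_nat[of "\<lambda>x. x \<in> P_below P p \<and> pre_le q x" q ?depth] assms by auto
  have "h \<in> H_set P p"
  proof -
    have "\<not> pre_lt h h'" if "h' \<in> P" "pre_lt h' p" for h'
    proof
      assume "pre_lt h h'"
      then have "h' \<in> P_below P p \<and> pre_le q h'"
        using that h(2) unfolding P_below_def pre_lt_def by (auto intro: pre_le_trans)
      then have "?depth h \<le> ?depth h'" using least by blast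
      then show False using pre_lt_imp_length_less[OF \<open>pre_lt h h'\<close>] by linarith
    qed
    then show ?thesis using h(1) unfolding H_set_def P_below_def by blast
  qed
  then show ?thesis using h(2) by blast
qed

lemma conditioned_indicator:
  assumes "finite P"
  shows "(of_bool (pre_le e p \<and> (\<forall>q\<in>P_below P p. \<not> pre_le e q)) :: int)
    = of_bool (pre_le e p) - int (card {h \<in> H_set P p. pre_le e h})
      + int (card {q \<in> T_set P p. pre_le e q})"
proof -
  define K where "K = {h \<in> H_set P p. pre_le e h}"
  have K: "antichain K" "\<And>x. x \<in> K \<Longrightarrow> pre_le e x" "finite K"
    using antichain_H_set[of P p] assms unfolding K_def antichain_def H_set_def by auto
  have T: "{q \<in> T_set P p. pre_le e q} = {(fst y, snd x) | x y. consecutive K x y}"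
    unfolding T_set_eq_proper_pair_glbs K_def by (rule proper_pair_glbs_above[OF antichain_H_set])
  show ?thesis
  proof (cases "K = {}")
    case True
    then have "{q \<in> T_set P p. pre_le e q} = {}"
      unfolding T consecutive_def by simp
    moreover have "\<forall>q\<in>P_below P p. \<not> pre_le e q"
      using True H_set_above_P_below pre_le_trans unfolding K_def by blast
    ultimately show ?thesis
      using True unfolding K_def by (simp only: card.empty) simp
  next
    case False
    then obtain h where h: "h \<in> H_set P p" "pre_le e h" unfolding K_def by blast
    then have "h \<in> P_below P p" "pre_le e p"
      unfolding H_set_def P_below_def pre_lt_def by (auto intro: pre_le_trans)
    moreover have "card {(fst y, snd x) | x y. consecutive K x y} + 1 = card K"
      by (rule card_consecutive_glbs[of K e]) (use K False in auto)
    ultimately show ?thesis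
      using h(2) T unfolding K_def by force
  qed
qed

lemma fcount_eq_sum:
  "int (fcount S q) = (\<Sum>e\<in>set_mset S. int (count S e) * of_bool (pre_le e q))"
  unfolding fcount_def by (simp add: Collect_conj_eq Int_commute)

lemma sum_fcount:
  assumes "finite A"
  shows "(\<Sum>q\<in>A. int (fcount S q))
    = (\<Sum>e\<in>set_mset S. int (count S e) * int (card {q \<in> A. pre_le e q}))"
proof -
  have "(\<Sum>q\<in>A. int (fcount S q))
      = (\<Sum>e\<in>set_mset S. int (count S e) * (\<Sum>q\<in>A. of_bool (pre_le e q)))"
    unfolding fcount_eq_sum sum_distrib_left by (rule sum.swap)
  then show ?thesis
    using assms by (simp add: Collect_conj_eq Int_commute)
qed

theorem theorem4:
  fixes T1 :: "'a list set" and T2 :: "'b list set" and h1 h2 :: nat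
    and S :: "('a list \<times> 'b list) multiset"
    and P :: "('a list \<times> 'b list) set" and p :: "'a list \<times> 'b list"
  assumes "rooted_tree T1" and "rooted_tree T2"
    and "leaves_at_depth T1 h1" and "leaves_at_depth T2 h2"
    and "\<forall>e\<in>#S. fully_specified T1 T2 e"
    and "P \<subseteq> T1 \<times> T2" and "p \<in> T1 \<times> T2"
  shows "int (Fcond T1 T2 S P p)
          = int (fcount S p) - (\<Sum>q\<in>H_set P p. int (fcount S q))
            + (\<Sum>q\<in>T_set P p. int (fcount S q))"
proof -
  define counted where "counted e \<longleftrightarrow> pre_le e p \<and> (\<forall>q\<in>P_below P p. \<not> pre_le e q)" for e
  have finite_trees: "finite (T1 \<times> T2)"
    using assms(1,2) unfolding rooted_tree_def by simp
  then have "finite P"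
    using assms(6) finite_subset by blast
  then have "finite (H_set P p)"
    unfolding H_set_def by simp
  then have "finite (T_set P p)"
    unfolding T_set_eq_proper_pair_glbs by (rule finite_proper_pair_glbs)
  have "set_mset S \<subseteq> {e \<in> T1 \<times> T2. fully_specified T1 T2 e}"
    using assms(5) unfolding fully_specified_def is_leaf_def by (auto simp: mem_Times_iff)
  then have "Fcond T1 T2 S P p = (\<Sum>e \<in> set_mset S \<inter> {e. counted e}. count S e)"
    unfolding Fcond_def counted_def[symmetric] using finite_trees
    by (intro sum.mono_neutral_right) auto
  then have "int (Fcond T1 T2 S P p) = (\<Sum>e\<in>set_mset S. int (count S e) * of_bool (counted e))"
    by simp
  also have "\<dots> = int (fcount S p) - (\<Sum>q\<in>H_set P p. int (fcount S q))
            + (\<Sum>q\<in>T_set P p. int (fcount S q))"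
    unfolding fcount_eq_sum[of S p] sum_fcount[OF \<open>finite (H_set P p)\<close>]
      sum_fcount[OF \<open>finite (T_set P p)\<close>] counted_def conditioned_indicator[OF \<open>finite P\<close>]
    by (simp add: algebra_simps sum.distrib sum_subtractf)
  finally show ?thesis .
qed

end
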